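(* For every $n\in\mathbb{N}$, every nonempty chain $c_k$ over $[n]$ with complementary chain $c'_{n-k}$, and every formula $\varphi$, the following are derivable in $\mathbf{CPN}_n$: (i) $\vdash_{(n)}\varphi\wedge_{(n)}\neg_{c_k}\varphi\to_{(n)}\perp_{c_k}$; (ii) $\vdash_{(n)}\perp_{c'_{n-k}}\to_{(n)}\varphi\vee_{(n)}\neg_{c_k}\varphi$; (iii) $\vdash_{(n)}\neg_{c_k}\varphi\to_{(n)}(\perp_{c_k}\to_{(n)}\varphi)$; (iv) $\vdash_{(n)}\neg_{c_k}\varphi\to_{(n)}(\perp_{c'_{n-k}}\to_{(n)}\neg_{(n)}\varphi)$; (v) $\vdash_{(n)}\neg_{c_k}\varphi\to_{(n)}(\varphi\leftrightarrow_{(n)}\perp_{c_k})$; (vi) $\vdash_{(n)}\neg_{c_k}\varphi\wedge_{(n)}\neg_{c'_{n-k}}\varphi\to_{(n)}\perp_{(n)}$; (vii) $\vdash_{(n)}\perp_{c_k}\wedge_{(n)}\perp_{c'_{n-k}}\to_{(n)}\perp_{(n)}$.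
   Context: Fix $n\in\mathbb{N}$, $n\ge 1$, and write $[n]=\{1,\dots,n\}$. Chains: a chain over $[n]$ is a finite sequence of distinct elements of $[n]$; chains with the same length and the same symbols are identified, so a chain is effectively a subset of $[n]$. $c_k$ denotes a chain with $k$ symbols, $\epsilon$ the empty chain, and $(n)$ the chain consisting of all symbols of $[n]$. For chains $c,d$: the concatenation $c\cdot d$ is the chain of symbols occurring in $c$ or in $d$; the coconcatenation $c\otimes d$ is the chain of symbols occurring in exactly one of $c,d$; $d$ is a subchain of $c$ if every symbol of $d$ is a symbol of $c$. The complementary chain $c'_{n-k}$ of $c_k$ is the chain of the symbols of $[n]$ not occurring in $c_k$. Language of $\mathbf{CPN}_n$: a countable set $P_n$ of propositional letters; constants $\perp_c$ for each chain $c$ over $[n]$ with $1\le |c|\le n-1$, and constants $\perp_{(n)}$ (contradiction) and $\top_{(n)}$ (truth); a unary connective $\neg_c$ for each nonempty chain $c$ over $[n]$ ($\neg_{(n)}$ is the strong negation; the $\neg_c$ with $|c|\le n-1$ are weak negations); a binary connective $\to_{(n)}$. Formulas: propositional letters and constants are formulas; if $\varphi,\psi$ are formulas then so are $\neg_c\varphi$ and $(\varphi\to_{(n)}\psi)$. Conventions: $\neg_\epsilon\varphi:=\varphi$, $\perp_\epsilon:=\top_{(n)}$, and $\perp_c$ for $c=(n)$ means $\perp_{(n)}$. Abbreviations: $\varphi\wedge_{(n)}\psi:=\neg_{(n)}(\varphi\to_{(n)}\neg_{(n)}\psi)$, $\varphi\vee_{(n)}\psi:=\neg_{(n)}\varphi\to_{(n)}\psi$,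 $\varphi\leftrightarrow_{(n)}\psi:=(\varphi\to_{(n)}\psi)\wedge_{(n)}(\psi\to_{(n)}\varphi)$. Axioms of $\mathbf{CPN}_n$, for all formulas $\varphi,\psi,\chi$ and all nonempty chains $c_k,c_r$ over $[n]$: (A1) $\varphi\to_{(n)}(\psi\to_{(n)}\varphi)$; (A2) $(\varphi\to_{(n)}(\psi\to_{(n)}\chi))\to_{(n)}((\varphi\to_{(n)}\psi)\to_{(n)}(\varphi\to_{(n)}\chi))$; (A3) $(\neg_{(n)}\psi\to_{(n)}\neg_{(n)}\varphi)\to_{(n)}((\neg_{(n)}\psi\to_{(n)}\varphi)\to_{(n)}\psi)$; (A4) $\varphi\to_{(n)}(\perp_{c_k}\to_{(n)}\neg_{c_k}\varphi)$; (A5) $\neg_{c_k}\neg_{c_r}\varphi\leftrightarrow_{(n)}\neg_{c_k\otimes c_r}\varphi$; (A6) $\neg_{c_k}\perp_{c_r}\leftrightarrow_{(n)}\perp_{c_k\otimes c_r}$; (A7) $\perp_{c_k}\to_{(n)}\perp_{c_r}$, whenever $c_r$ is a subchain of $c_k$. The only rule of inference is modus ponens (from $\varphi$ and $\varphi\to_{(n)}\psi$ infer $\psi$). For a set $\Sigma$ of formulas, $\Sigma\vdash_{(n)}\varphi$ means there is a finite sequence of formulas ending with $\varphi$, each of which is an axiom, a member of $\Sigma$, or obtained from two earlier members by modus ponens; $\vdash_{(n)}\varphi$ means $\emptyset\vdash_{(n)}\varphi$. *)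

theory Defs
  imports Main
begin

(* Chains over [n] are identified with subsets of {1..n}.
   Bot c is the constant \<bottom>_c; Bot {} is \<top>_(n) (convention \<bottom>_\<epsilon> := \<top>_(n)),
   Bot {1..n} is \<bottom>_(n). *)
datatype form =
    PVar nat
  | Bot "nat set"
  | Neg "nat set" form
  | Imp form form

abbreviation Top :: form where "Top \<equiv> Bot {}"

definition neg :: "nat set \<Rightarrow> form \<Rightarrow> form" where
  "neg c \<phi> = (if c = {} then \<phi> else Neg c \<phi>)"

fun wf :: "nat \<Rightarrow> form \<Rightarrow> bool" where
  "wf n (PVar p) = True"
| "wf n (Bot c) = (c \<subseteq> {1..n})"
| "wf n (Neg c \<phi>) = (c \<noteq> {} \<and> c \<subseteq> {1..n} \<and> wf n \<phi>)"
| "wf n (Imp \<phi> \<psi>) = (wf n \<phi> \<and> wf n \<psi>)"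

definition full :: "nat \<Rightarrow> nat set" where "full n = {1..n}"

definition SNeg :: "nat \<Rightarrow> form \<Rightarrow> form" where "SNeg n \<phi> = Neg (full n) \<phi>"
definition Conj :: "nat \<Rightarrow> form \<Rightarrow> form \<Rightarrow> form" where
  "Conj n \<phi> \<psi> = SNeg n (Imp \<phi> (SNeg n \<psi>))"
definition Disj :: "nat \<Rightarrow> form \<Rightarrow> form \<Rightarrow> form" where
  "Disj n \<phi> \<psi> = Imp (SNeg n \<phi>) \<psi>"
definition Iff :: "nat \<Rightarrow> form \<Rightarrow> form \<Rightarrow> form" where
  "Iff n \<phi> \<psi> = Conj n (Imp \<phi> \<psi>) (Imp \<psi> \<phi>)"

definition cocat :: "nat set \<Rightarrow> nat set \<Rightarrow> nat set" where
  "cocat c d = (c - d) \<union> (d - c)"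

definition chain :: "nat \<Rightarrow> nat set \<Rightarrow> bool" where
  "chain n c \<longleftrightarrow> c \<noteq> {} \<and> c \<subseteq> {1..n}"

inductive axiom :: "nat \<Rightarrow> form \<Rightarrow> bool" for n where
  A1: "\<lbrakk>wf n \<phi>; wf n \<psi>\<rbrakk> \<Longrightarrow> axiom n (Imp \<phi> (Imp \<psi> \<phi>))"
| A2: "\<lbrakk>wf n \<phi>; wf n \<psi>; wf n \<chi>\<rbrakk> \<Longrightarrow>
     axiom n (Imp (Imp \<phi> (Imp \<psi> \<chi>)) (Imp (Imp \<phi> \<psi>) (Imp \<phi> \<chi>)))"
| A3: "\<lbrakk>wf n \<phi>; wf n \<psi>\<rbrakk> \<Longrightarrow>
     axiom n (Imp (Imp (SNeg n \<psi>) (SNeg n \<phi>)) (Imp (Imp (SNeg n \<psi>) \<phi>) \<psi>))"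
| A4: "\<lbrakk>wf n \<phi>; chain n c\<rbrakk> \<Longrightarrow> axiom n (Imp \<phi> (Imp (Bot c) (Neg c \<phi>)))"
| A5: "\<lbrakk>wf n \<phi>; chain n c; chain n d\<rbrakk> \<Longrightarrow>
     axiom n (Iff n (Neg c (Neg d \<phi>)) (neg (cocat c d) \<phi>))"
| A6: "\<lbrakk>chain n c; chain n d\<rbrakk> \<Longrightarrow>
     axiom n (Iff n (Neg c (Bot d)) (Bot (cocat c d)))"
| A7: "\<lbrakk>chain n c; chain n d; d \<subseteq> c\<rbrakk> \<Longrightarrow> axiom n (Imp (Bot c) (Bot d))"

inductive deriv :: "nat \<Rightarrow> form set \<Rightarrow> form \<Rightarrow> bool" for n \<Sigma> where
  ax: "axiom n \<phi> \<Longrightarrow> deriv n \<Sigma> \<phi>"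
| hyp: "\<phi> \<in> \<Sigma> \<Longrightarrow> deriv n \<Sigma> \<phi>"
| mp: "\<lbrakk>deriv n \<Sigma> \<phi>; deriv n \<Sigma> (Imp \<phi> \<psi>)\<rbrakk> \<Longrightarrow> deriv n \<Sigma> \<psi>"

abbreviation provable :: "nat \<Rightarrow> form \<Rightarrow> bool" where "provable n \<phi> \<equiv> deriv n {} \<phi>"

end

theory Submission
  imports Defs
begin

text \<open>
  With respect to the strong negation, A1--A3 and modus ponens form classical propositional
  logic: the deduction theorem, reductio, conjunction and case distinction are available.
  Weak negations are handled by A4--A6: given \<open>\<bottom>\<^sub>d\<close>, A4 prefixes \<open>\<not>\<^sub>d\<close> to anything derived,
  and A5/A6 collapse \<open>\<not>\<^sub>d \<not>\<^sub>c\<close> into \<open>\<not>\<^bsub>d \<otimes> c\<^esub>\<close>.  For \<open>d = c\<close> (where \<open>d \<otimes> c = \<epsilon>\<close>) this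
  cancels \<open>\<not>\<^sub>c\<close>; for \<open>d = c'\<close> (where \<open>d \<otimes> c = (n)\<close>) it turns \<open>\<not>\<^sub>c\<close> into the strong negation.
  Moreover \<open>\<not>\<^sub>(\<^sub>n\<^sub>) \<bottom>\<^sub>c\<close> yields \<open>\<bottom>\<^sub>c\<^sub>'\<close> by A6.
\<close>

definition wf_hyps :: "nat \<Rightarrow> form set \<Rightarrow> bool" where
  "wf_hyps n \<Gamma> \<longleftrightarrow> (\<forall>\<psi>\<in>\<Gamma>. wf n \<psi>)"

lemma wf_hyps_empty [simp]: "wf_hyps n {}"
  by (simp add: wf_hyps_def)

lemma wf_hyps_insert [simp]: "wf_hyps n (insert \<psi> \<Gamma>) \<longleftrightarrow> wf n \<psi> \<and> wf_hyps n \<Gamma>"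
  by (simp add: wf_hyps_def)

lemma neg_empty [simp]: "neg {} \<phi> = \<phi>"
  by (simp add: neg_def)

lemma neg_nonempty [simp]: "c \<noteq> {} \<Longrightarrow> neg c \<phi> = Neg c \<phi>"
  by (simp add: neg_def)

lemma wf_neg [simp]: "wf n (neg c \<phi>) \<longleftrightarrow> wf n \<phi> \<and> c \<subseteq> {1..n}"
  by (auto simp: neg_def)

lemma wf_SNeg [simp]: "wf n (SNeg n \<phi>) \<longleftrightarrow> 0 < n \<and> wf n \<phi>"
  by (auto simp: SNeg_def full_def)

lemma wf_Conj [simp]: "wf n (Conj n \<phi> \<psi>) \<longleftrightarrow> 0 < n \<and> wf n \<phi> \<and> wf n \<psi>"
  by (auto simp: Conj_def)

lemma wf_Iff [simp]: "wf n (Iff n \<phi> \<psi>) \<longleftrightarrow> 0 < n \<and> wf n \<phi> \<and> wf n \<psi>"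
  by (auto simp: Iff_def)

lemma chain_full: "0 < n \<Longrightarrow> chain n (full n)"
  by (auto simp: chain_def full_def)

lemma chain_subset_full: "chain n c \<Longrightarrow> c \<subseteq> full n"
  by (simp add: chain_def full_def)

lemma chain_complement: "chain n c \<Longrightarrow> c \<noteq> full n \<Longrightarrow> chain n (full n - c)"
  by (auto simp: chain_def full_def)

lemma cocat_self [simp]: "cocat c c = {}"
  by (simp add: cocat_def)

lemma cocat_Diff_self_left: "c \<subseteq> A \<Longrightarrow> cocat (A - c) c = A"
  by (auto simp: cocat_def)

lemma cocat_Diff_self_right: "c \<subseteq> A \<Longrightarrow> cocat c (A - c) = A"
  by (auto simp: cocat_def)

lemma cocat_superset_left: "c \<subseteq> A \<Longrightarrow> cocat A c = A - c"
  by (auto simp: cocat_def)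

lemma cocat_Diff_superset: "c \<subseteq> A \<Longrightarrow> cocat (A - c) A = c"
  by (auto simp: cocat_def)

lemma axiom_wf: "axiom n \<phi> \<Longrightarrow> 0 < n \<Longrightarrow> wf n \<phi>"
  by (induction rule: axiom.induct) (auto simp: chain_def cocat_def)

lemma deriv_wf: "deriv n \<Gamma> \<phi> \<Longrightarrow> 0 < n \<Longrightarrow> wf_hyps n \<Gamma> \<Longrightarrow> wf n \<phi>"
  by (induction rule: deriv.induct) (auto simp: axiom_wf wf_hyps_def)

lemma deriv_mono: "deriv n \<Gamma> \<phi> \<Longrightarrow> \<Gamma> \<subseteq> \<Delta> \<Longrightarrow> deriv n \<Delta> \<phi>"
  by (induction rule: deriv.induct) (auto intro: deriv.intros)

lemma deriv_insert: "deriv n \<Gamma> \<phi> \<Longrightarrow> deriv n (insert \<psi> \<Gamma>) \<phi>"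
  by (erule deriv_mono) blast

lemma deriv_K: "wf n \<phi> \<Longrightarrow> wf n \<psi> \<Longrightarrow> deriv n \<Gamma> (Imp \<phi> (Imp \<psi> \<phi>))"
  by (intro deriv.ax axiom.A1)

lemma deriv_S:
  "wf n \<phi> \<Longrightarrow> wf n \<psi> \<Longrightarrow> wf n \<chi> \<Longrightarrow>
    deriv n \<Gamma> (Imp (Imp \<phi> (Imp \<psi> \<chi>)) (Imp (Imp \<phi> \<psi>) (Imp \<phi> \<chi>)))"
  by (intro deriv.ax axiom.A2)

lemma deriv_Imp_self: "wf n \<phi> \<Longrightarrow> deriv n \<Gamma> (Imp \<phi> \<phi>)"
  by (meson deriv.mp deriv_K deriv_S wf.simps(4))

lemma deduction:
  "deriv n (insert \<phi> \<Gamma>) \<psi> \<Longrightarrow> 0 < n \<Longrightarrow> wf n \<phi> \<Longrightarrow> wf_hyps n \<Gamma> \<Longrightarrow>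
    deriv n \<Gamma> (Imp \<phi> \<psi>)"
proof (induction rule: deriv.induct)
  case (ax \<chi>)
  then show ?case by (meson axiom_wf deriv.ax deriv.mp deriv_K)
next
  case (hyp \<chi>)
  then show ?case
    by (cases "\<chi> = \<phi>")
      (auto simp: wf_hyps_def intro: deriv_Imp_self deriv.mp[OF deriv.hyp deriv_K])
next
  case (mp \<chi> \<psi>)
  then have "wf n \<chi>" "wf n \<psi>" using deriv_wf[OF mp.hyps(2)] by auto
  then show ?case using mp by (meson deriv.mp deriv_S)
qed

context
  fixes n :: nat
  assumes n_pos: "0 < n"
begin

declare n_pos [simp]

lemma full_nonempty [simp]: "full n \<noteq> {}"
  by (simp add: full_def Suc_le_eq)

lemma reductio:
  assumes "wf_hyps n \<Gamma>" "wf n \<phi>" "wf n \<psi>"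
    and "deriv n (insert (SNeg n \<phi>) \<Gamma>) \<psi>" "deriv n (insert (SNeg n \<phi>) \<Gamma>) (SNeg n \<psi>)"
  shows "deriv n \<Gamma> \<phi>"
proof -
  have "deriv n \<Gamma> (Imp (SNeg n \<phi>) \<psi>)" "deriv n \<Gamma> (Imp (SNeg n \<phi>) (SNeg n \<psi>))"
    using assms by (simp_all add: deduction)
  moreover have "deriv n \<Gamma> (Imp (Imp (SNeg n \<phi>) (SNeg n \<psi>)) (Imp (Imp (SNeg n \<phi>) \<psi>) \<phi>))"
    using assms by (intro deriv.ax axiom.A3)
  ultimately show ?thesis by (meson deriv.mp)
qed

lemma explosion:
  assumes "wf_hyps n \<Gamma>" "wf n \<phi>" "deriv n \<Gamma> \<phi>" "deriv n \<Gamma> (SNeg n \<phi>)" "wf n \<psi>"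
  shows "deriv n \<Gamma> \<psi>"
  by (rule reductio[of \<Gamma> \<psi> \<phi>]) (use assms in \<open>simp_all add: deriv_insert\<close>)

lemma double_negation_elim:
  assumes "wf_hyps n \<Gamma>" "wf n \<phi>" "deriv n \<Gamma> (SNeg n (SNeg n \<phi>))"
  shows "deriv n \<Gamma> \<phi>"
  by (rule reductio[of \<Gamma> \<phi> "SNeg n \<phi>"]) (use assms in \<open>simp_all add: deriv_insert deriv.hyp\<close>)

lemma excluded_middle_cases:
  assumes \<Gamma>: "wf_hyps n \<Gamma>" and wf: "wf n \<phi>" "wf n \<psi>"
    and pos: "deriv n (insert \<phi> \<Gamma>) \<psi>" and neg: "deriv n (insert (SNeg n \<phi>) \<Gamma>) \<psi>"
  shows "deriv n \<Gamma> \<psi>"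
proof -
  let ?\<Delta> = "insert (SNeg n \<psi>) \<Gamma>"
  have "deriv n ?\<Delta> (SNeg n \<phi>)"
  proof (rule reductio[of _ _ \<psi>])
    let ?\<Theta> = "insert (SNeg n (SNeg n \<phi>)) ?\<Delta>"
    have "deriv n ?\<Theta> \<phi>"
      by (rule double_negation_elim) (use \<Gamma> wf in \<open>simp_all add: deriv.hyp\<close>)
    moreover have "deriv n ?\<Theta> (Imp \<phi> \<psi>)"
      using deduction[OF pos] \<Gamma> wf by (simp add: deriv_insert)
    ultimately show "deriv n ?\<Theta> \<psi>" by (rule deriv.mp)
  qed (use \<Gamma> wf in \<open>simp_all add: deriv.hyp\<close>)
  moreover have "deriv n ?\<Delta> (Imp (SNeg n \<phi>) \<psi>)"
    using deduction[OF neg] \<Gamma> wf by (simp add: deriv_insert)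
  ultimately have "deriv n ?\<Delta> \<psi>" by (rule deriv.mp)
  with \<Gamma> wf show ?thesis
    by (intro reductio[of \<Gamma> \<psi> \<psi>]) (simp_all add: deriv.hyp)
qed

lemma ConjD1:
  assumes "wf_hyps n \<Gamma>" "wf n \<phi>" "wf n \<psi>" "deriv n \<Gamma> (Conj n \<phi> \<psi>)"
  shows "deriv n \<Gamma> \<phi>"
proof (rule reductio[of _ _ "Imp \<phi> (SNeg n \<psi>)"])
  have "deriv n (insert \<phi> (insert (SNeg n \<phi>) \<Gamma>)) (SNeg n \<psi>)"
    by (rule explosion[of _ \<phi>]) (use assms in \<open>simp_all add: deriv.hyp\<close>)
  then show "deriv n (insert (SNeg n \<phi>) \<Gamma>) (Imp \<phi> (SNeg n \<psi>))"
    using assms by (simp add: deduction)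
qed (use assms in \<open>simp_all add: Conj_def deriv_insert\<close>)

lemma ConjD2:
  assumes "wf_hyps n \<Gamma>" "wf n \<phi>" "wf n \<psi>" "deriv n \<Gamma> (Conj n \<phi> \<psi>)"
  shows "deriv n \<Gamma> \<psi>"
proof (rule reductio[of _ _ "Imp \<phi> (SNeg n \<psi>)"])
  show "deriv n (insert (SNeg n \<psi>) \<Gamma>) (Imp \<phi> (SNeg n \<psi>))"
    by (rule deduction) (use assms in \<open>simp_all add: deriv.hyp\<close>)
qed (use assms in \<open>simp_all add: Conj_def deriv_insert\<close>)

lemma ConjI:
  assumes \<Gamma>: "wf_hyps n \<Gamma>" and wf: "wf n \<phi>" "wf n \<psi>"
    and "deriv n \<Gamma> \<phi>" "deriv n \<Gamma> \<psi>"
  shows "deriv n \<Gamma> (Conj n \<phi> \<psi>)"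
  unfolding Conj_def
proof (rule reductio[of _ _ \<psi>])
  let ?\<Delta> = "insert (SNeg n (SNeg n (Imp \<phi> (SNeg n \<psi>)))) \<Gamma>"
  have "deriv n ?\<Delta> (Imp \<phi> (SNeg n \<psi>))"
    by (rule double_negation_elim) (use \<Gamma> wf in \<open>simp_all add: deriv.hyp\<close>)
  then show "deriv n ?\<Delta> (SNeg n \<psi>)"
    using assms by (meson deriv.mp deriv_insert)
qed (use assms in \<open>simp_all add: deriv_insert\<close>)

lemma IffD1:
  assumes "wf_hyps n \<Gamma>" "wf n \<phi>" "wf n \<psi>" "deriv n \<Gamma> (Iff n \<phi> \<psi>)" "deriv n \<Gamma> \<phi>"
  shows "deriv n \<Gamma> \<psi>"
  using assms ConjD1[of \<Gamma> "Imp \<phi> \<psi>" "Imp \<psi> \<phi>"] by (simp add: Iff_def) (meson deriv.mp)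

lemma Neg_intro:
  "chain n c \<Longrightarrow> wf n \<phi> \<Longrightarrow> deriv n \<Gamma> \<phi> \<Longrightarrow> deriv n \<Gamma> (Bot c) \<Longrightarrow>
    deriv n \<Gamma> (Neg c \<phi>)"
  by (meson axiom.A4 deriv.ax deriv.mp)

lemma Neg_Neg_cocat:
  assumes "wf_hyps n \<Gamma>" "chain n c" "chain n d" "wf n \<phi>" "deriv n \<Gamma> (Neg c (Neg d \<phi>))"
  shows "deriv n \<Gamma> (neg (cocat c d) \<phi>)"
proof (rule IffD1)
  show "deriv n \<Gamma> (Iff n (Neg c (Neg d \<phi>)) (neg (cocat c d) \<phi>))"
    using assms by (intro deriv.ax axiom.A5)
qed (use assms in \<open>auto simp: chain_def cocat_def\<close>)

lemma Neg_Bot_cocat: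
  assumes "wf_hyps n \<Gamma>" "chain n c" "chain n d" "deriv n \<Gamma> (Neg c (Bot d))"
  shows "deriv n \<Gamma> (Bot (cocat c d))"
proof (rule IffD1)
  show "deriv n \<Gamma> (Iff n (Neg c (Bot d)) (Bot (cocat c d)))"
    using assms by (intro deriv.ax axiom.A6)
qed (use assms in \<open>auto simp: chain_def cocat_def\<close>)

lemma Neg_Bot_cancel:
  assumes \<Gamma>: "wf_hyps n \<Gamma>" and c: "chain n c" and \<phi>: "wf n \<phi>"
    and neg: "deriv n \<Gamma> (Neg c \<phi>)" and bot: "deriv n \<Gamma> (Bot c)"
  shows "deriv n \<Gamma> \<phi>"
proof -
  have "deriv n \<Gamma> (Neg c (Neg c \<phi>))"
    using c \<phi> by (intro Neg_intro[OF c _ neg bot]) (simp add: chain_def)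
  then show ?thesis
    using Neg_Neg_cocat[OF \<Gamma> c c \<phi>] by simp
qed

lemma Neg_Bot_compl_SNeg:
  assumes \<Gamma>: "wf_hyps n \<Gamma>" and c: "chain n c" and \<phi>: "wf n \<phi>"
    and neg: "deriv n \<Gamma> (Neg c \<phi>)" and bot': "deriv n \<Gamma> (Bot (full n - c))"
  shows "deriv n \<Gamma> (SNeg n \<phi>)"
proof (cases "c = full n")
  case True
  with neg show ?thesis by (simp add: SNeg_def)
next
  case False
  with c have c': "chain n (full n - c)" by (rule chain_complement)
  have "deriv n \<Gamma> (Neg (full n - c) (Neg c \<phi>))"
    using c \<phi> by (intro Neg_intro[OF c' _ neg bot']) (simp add: chain_def)
  then have "deriv n \<Gamma> (neg (cocat (full n - c) c) \<phi>)"
    by (rule Neg_Neg_cocat[OF \<Gamma> c' c \<phi>])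
  moreover have "cocat (full n - c) c = full n"
    using c by (simp add: cocat_Diff_self_left chain_subset_full)
  ultimately show ?thesis
    by (simp add: SNeg_def)
qed

lemma SNeg_Bot_compl_Neg:
  assumes \<Gamma>: "wf_hyps n \<Gamma>" and c: "chain n c" and \<phi>: "wf n \<phi>"
    and bot': "deriv n \<Gamma> (Bot (full n - c))" and sneg: "deriv n \<Gamma> (SNeg n \<phi>)"
  shows "deriv n \<Gamma> (Neg c \<phi>)"
proof (cases "c = full n")
  case True
  with sneg show ?thesis by (simp add: SNeg_def)
next
  case False
  with c have c': "chain n (full n - c)" by (rule chain_complement)
  have "deriv n \<Gamma> (Neg (full n - c) (Neg (full n) \<phi>))"
    using sneg \<phi> chain_full[OF n_pos]
    by (intro Neg_intro[OF c' _ _ bot']) (simp_all add: SNeg_def chain_def)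
  then have "deriv n \<Gamma> (neg (cocat (full n - c) (full n)) \<phi>)"
    by (rule Neg_Neg_cocat[OF \<Gamma> c' chain_full[OF n_pos] \<phi>])
  then show ?thesis
    using c by (simp add: cocat_Diff_superset chain_subset_full chain_def)
qed

lemma SNeg_Bot_compl:
  assumes "wf_hyps n \<Gamma>" and c: "chain n c" and "deriv n \<Gamma> (SNeg n (Bot c))"
  shows "deriv n \<Gamma> (Bot (full n - c))"
proof -
  have "deriv n \<Gamma> (Bot (cocat (full n) c))"
    using assms by (intro Neg_Bot_cocat[OF _ chain_full[OF n_pos]]) (simp_all add: SNeg_def chain_def)
  with c show ?thesis
    by (simp add: cocat_superset_left chain_subset_full)
qed

lemma Neg_contradiction_Bot:
  assumes \<Gamma>: "wf_hyps n \<Gamma>" and c: "chain n c" and \<phi>: "wf n \<phi>"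
    and pos: "deriv n \<Gamma> \<phi>" and neg: "deriv n \<Gamma> (Neg c \<phi>)"
  shows "deriv n \<Gamma> (Bot c)"
proof (rule reductio[of _ _ \<phi>])
  let ?\<Delta> = "insert (SNeg n (Bot c)) \<Gamma>"
  have \<Delta>: "wf_hyps n ?\<Delta>" using \<Gamma> c by (simp add: chain_def)
  have "deriv n ?\<Delta> (Bot (full n - c))"
    by (rule SNeg_Bot_compl[OF \<Delta> c deriv.hyp]) simp
  then show "deriv n ?\<Delta> (SNeg n \<phi>)"
    by (rule Neg_Bot_compl_SNeg[OF \<Delta> c \<phi> deriv_insert[OF neg]])
qed (use assms in \<open>simp_all add: deriv_insert chain_def\<close>)

lemma Neg_Iff_Bot:
  assumes \<Gamma>: "wf_hyps n \<Gamma>" and c: "chain n c" and \<phi>: "wf n \<phi>"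
    and neg: "deriv n \<Gamma> (Neg c \<phi>)"
  shows "deriv n \<Gamma> (Iff n \<phi> (Bot c))"
  unfolding Iff_def
proof (rule ConjI)
  have "deriv n (insert \<phi> \<Gamma>) (Bot c)"
    using \<Gamma> \<phi>
    by (intro Neg_contradiction_Bot[OF _ c \<phi> deriv.hyp deriv_insert[OF neg]]) (simp_all add: chain_def)
  with \<Gamma> \<phi> show "deriv n \<Gamma> (Imp \<phi> (Bot c))" by (simp add: deduction)
  have "deriv n (insert (Bot c) \<Gamma>) \<phi>"
    using \<Gamma> c
    by (intro Neg_Bot_cancel[OF _ c \<phi> deriv_insert[OF neg] deriv.hyp]) (simp_all add: chain_def)
  with \<Gamma> c show "deriv n \<Gamma> (Imp (Bot c) \<phi>)" by (simp add: deduction chain_def)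
qed (use assms in \<open>simp_all add: chain_def\<close>)

lemma complementary_Negs_Bot_full:
  assumes \<Gamma>: "wf_hyps n \<Gamma>" and c: "chain n c" and \<phi>: "wf n \<phi>"
    and neg: "deriv n \<Gamma> (Neg c \<phi>)" and neg': "deriv n \<Gamma> (neg (full n - c) \<phi>)"
  shows "deriv n \<Gamma> (Bot (full n))"
proof (cases "c = full n")
  case True
  with neg neg' have "deriv n \<Gamma> \<phi>" "deriv n \<Gamma> (SNeg n \<phi>)"
    by (simp_all add: SNeg_def)
  then show ?thesis
    by (rule explosion[OF \<Gamma> \<phi>]) (simp add: full_def)
next
  case False
  with c have c': "chain n (full n - c)" by (rule chain_complement)
  with neg' have neg': "deriv n \<Gamma> (Neg (full n - c) \<phi>)" by (simp add: chain_def)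
  have cc': "full n - (full n - c) = c"
    using c by (auto simp: chain_def full_def)
  txt \<open>Whichever of \<open>\<bottom>\<^sub>c\<close> and \<open>\<not>\<^sub>(\<^sub>n\<^sub>) \<bottom>\<^sub>c\<close> holds, one of \<open>\<bottom>\<^sub>c\<close>, \<open>\<bottom>\<^sub>c\<^sub>'\<close> is available; it
    cancels one weak negation and makes the other one strong.\<close>
  show ?thesis
  proof (rule excluded_middle_cases[OF \<Gamma> _ _ _ _])
    let ?\<Delta> = "insert (Bot c) \<Gamma>"
    have \<Delta>: "wf_hyps n ?\<Delta>" using \<Gamma> c by (simp add: chain_def)
    have bot: "deriv n ?\<Delta> (Bot c)" by (rule deriv.hyp) simp
    have "deriv n ?\<Delta> \<phi>"
      by (rule Neg_Bot_cancel[OF \<Delta> c \<phi> deriv_insert[OF neg] bot])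
    moreover have "deriv n ?\<Delta> (SNeg n \<phi>)"
      by (rule Neg_Bot_compl_SNeg[OF \<Delta> c' \<phi> deriv_insert[OF neg']]) (simp add: cc' bot)
    ultimately show "deriv n ?\<Delta> (Bot (full n))"
      by (rule explosion[OF \<Delta> \<phi>]) (simp_all add: full_def)
  next
    let ?\<Delta> = "insert (SNeg n (Bot c)) \<Gamma>"
    have \<Delta>: "wf_hyps n ?\<Delta>" using \<Gamma> c by (simp add: chain_def)
    have bot': "deriv n ?\<Delta> (Bot (full n - c))"
      by (rule SNeg_Bot_compl[OF \<Delta> c deriv.hyp]) simp
    have "deriv n ?\<Delta> \<phi>"
      by (rule Neg_Bot_cancel[OF \<Delta> c' \<phi> deriv_insert[OF neg'] bot'])
    moreover have "deriv n ?\<Delta> (SNeg n \<phi>)"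
      by (rule Neg_Bot_compl_SNeg[OF \<Delta> c \<phi> deriv_insert[OF neg] bot'])
    ultimately show "deriv n ?\<Delta> (Bot (full n))"
      by (rule explosion[OF \<Delta> \<phi>]) (simp_all add: full_def)
  qed (use c in \<open>simp_all add: full_def chain_def\<close>)
qed

lemma complementary_Bots_Bot_full:
  assumes \<Gamma>: "wf_hyps n \<Gamma>" and c: "chain n c"
    and bot: "deriv n \<Gamma> (Bot c)" and bot': "deriv n \<Gamma> (Bot (full n - c))"
  shows "deriv n \<Gamma> (Bot (full n))"
proof (cases "c = full n")
  case True
  with bot show ?thesis by simp
next
  case False
  with c have c': "chain n (full n - c)" by (rule chain_complement)
  have "deriv n \<Gamma> (Neg c (Bot (full n - c)))"
    by (rule Neg_intro[OF c _ bot' bot]) (simp add: full_def)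
  then show ?thesis
    using Neg_Bot_cocat[OF \<Gamma> c c'] c by (simp add: cocat_Diff_self_right chain_subset_full)
qed

lemma provable_Imp_Imp:
  assumes "wf n \<phi>" "wf n \<psi>" "deriv n {\<phi>, \<psi>} \<chi>"
  shows "provable n (Imp \<phi> (Imp \<psi> \<chi>))"
proof -
  have "deriv n (insert \<psi> {\<phi>}) \<chi>"
    using assms(3) by (simp add: insert_commute)
  with assms have "deriv n {\<phi>} (Imp \<psi> \<chi>)" by (simp add: deduction)
  with assms show ?thesis by (simp add: deduction)
qed

lemma provable_Conj_Imp:
  assumes \<phi>: "wf n \<phi>" and \<psi>: "wf n \<psi>" and "deriv n {\<phi>, \<psi>} \<chi>"
  shows "provable n (Imp (Conj n \<phi> \<psi>) \<chi>)"
proof -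
  let ?\<Gamma> = "{Conj n \<phi> \<psi>}"
  have \<Gamma>: "wf_hyps n ?\<Gamma>" using \<phi> \<psi> by simp
  have conj: "deriv n ?\<Gamma> (Conj n \<phi> \<psi>)" by (rule deriv.hyp) simp
  have "deriv n ?\<Gamma> (Imp \<phi> (Imp \<psi> \<chi>))"
    using provable_Imp_Imp[OF assms] by (rule deriv_mono) simp
  then have "deriv n ?\<Gamma> \<chi>"
    using ConjD1[OF \<Gamma> \<phi> \<psi> conj] ConjD2[OF \<Gamma> \<phi> \<psi> conj] by (meson deriv.mp)
  with \<Gamma> \<phi> \<psi> show ?thesis by (simp add: deduction)
qed

end

theorem mainTheorem5:
  fixes n :: nat and c :: "nat set" and \<phi> :: form
  assumes "n \<ge> 1" and "chain n c" and "wf n \<phi>"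
  shows "provable n (Imp (Conj n \<phi> (Neg c \<phi>)) (Bot c))
    \<and> provable n (Imp (Bot (full n - c)) (Disj n \<phi> (Neg c \<phi>)))
    \<and> provable n (Imp (Neg c \<phi>) (Imp (Bot c) \<phi>))
    \<and> provable n (Imp (Neg c \<phi>) (Imp (Bot (full n - c)) (SNeg n \<phi>)))
    \<and> provable n (Imp (Neg c \<phi>) (Iff n \<phi> (Bot c)))
    \<and> provable n (Imp (Conj n (Neg c \<phi>) (neg (full n - c) \<phi>)) (Bot (full n)))
    \<and> provable n (Imp (Conj n (Bot c) (Bot (full n - c))) (Bot (full n)))"
proof -
  note c = assms(2) and \<phi> = assms(3)
  from assms(1) have n: "0 < n" by simp
  have wf: "wf n (Neg c \<phi>)" "wf n (Bot c)" "wf n (Bot (full n - c))" "wf n (neg (full n - c) \<phi>)"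
    using c \<phi> by (auto simp: chain_def full_def)
  show ?thesis
    unfolding Disj_def
    by (intro conjI
      provable_Conj_Imp[OF n \<phi> wf(1) Neg_contradiction_Bot[OF n _ c \<phi>]]
      provable_Imp_Imp[OF n wf(3) _ SNeg_Bot_compl_Neg[OF n _ c \<phi>]]
      provable_Imp_Imp[OF n wf(1) wf(2) Neg_Bot_cancel[OF n _ c \<phi>]]
      provable_Imp_Imp[OF n wf(1) wf(3) Neg_Bot_compl_SNeg[OF n _ c \<phi>]]
      deduction[OF Neg_Iff_Bot[OF n _ c \<phi> deriv.hyp] n wf(1)]
      provable_Conj_Imp[OF n wf(1) wf(4) complementary_Negs_Bot_full[OF n _ c \<phi>]]
      provable_Conj_Imp[OF n wf(2) wf(3) complementary_Bots_Bot_full[OF n _ c]])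
      (use c in \<open>auto simp: wf \<phi> n deriv.hyp chain_def full_def\<close>)
qed

end
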